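(* Let $T$ be a tree of order $n\ge 2$ with set of support vertices $S=\{v_1,\dots,v_s\}$, where $v_i$ is adjacent to exactly $\ell_i$ leaves. Then $$\gamma^{0}_{st}(T)\ge -n+2\left(\left\lfloor\frac{\ell_1}{2}\right\rfloor+\cdots+\left\lfloor\frac{\ell_s}{2}\right\rfloor\right).$$ Moreover, equality holds if and only if $T\in\Omega$.
   Context: For a vertex $v$ of a graph $G=(V,E)$, $N(v)$ is its open neighborhood, and for $f:V\to\mathbb{R}$ and $B\subseteq V$ write $f(B)=\sum_{v\in B}f(v)$; $f(V)$ is the weight of $f$. An inverse signed total dominating function (ISTDF) of $G$ is a function $f:V\to\{-1,1\}$ such that $f(N(v))\le 0$ for every $v\in V$. The inverse signed total domination number $\gamma^{0}_{st}(G)$ is the maximum weight of an ISTDF of $G$. For a tree $T$: a leaf is a vertex of degree $1$; a support vertex is a vertex adjacent to at least one leaf; $L=L(T)$ and $S=S(T)$ denote the sets of leaves and of support vertices; for $w\in S$, $L_w$ is the set of leaves adjacent to $w$; $T'$ is the subgraph of $T$ induced by $S$, and $\Delta(T')$ its maximum degree. The family $\Omega$ consists of all trees $T$ such that either $T$ is isomorphic to the path $P_2$, or all of the following hold: (a) $|L_w|\ge 2$ for every support vertex $w$; (b) $\Delta(T')\le 1$; (b1) if $\Delta(T')=1$, then every vertex of $T$ is a leaf or a support vertex (i.e. $V=L\cup S$) and $|L_w|$ is even for every support vertex $w$; (b2) if $\Delta(T')=0$, then either $T$ is isomorphic to the star $K_{1,n-1}$, or each support vertex is adjacent to exactly one vertex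 of $V\setminus(L\cup S)$, every vertex of $V\setminus(L\cup S)$ has at least one neighbor in $S$, and $|L_w|$ is even for every support vertex $w$. *)

theory Defs
  imports Main
begin

definition simple_graph :: "'a set \<Rightarrow> 'a set set \<Rightarrow> bool" where
  "simple_graph V E \<longleftrightarrow> finite V \<and>
     (\<forall>e\<in>E. \<exists>u v. e = {u, v} \<and> u \<noteq> v \<and> u \<in> V \<and> v \<in> V)"

definition nbhd :: "'a set \<Rightarrow> 'a set set \<Rightarrow> 'a \<Rightarrow> 'a set" where
  "nbhd V E v = {u \<in> V. {u, v} \<in> E}"

definition graph_connected :: "'a set \<Rightarrow> 'a set set \<Rightarrow> bool" where
  "graph_connected V E \<longleftrightarrow>
     (\<forall>u\<in>V. \<forall>v\<in>V. (u, v) \<in> {(x, y). {x, y} \<in> E}\<^sup>*)"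

definition is_cycle :: "'a set \<Rightarrow> 'a set set \<Rightarrow> 'a list \<Rightarrow> bool" where
  "is_cycle V E xs \<longleftrightarrow> length xs \<ge> 3 \<and> distinct xs \<and> set xs \<subseteq> V \<and>
     (\<forall>i. Suc i < length xs \<longrightarrow> {xs ! i, xs ! Suc i} \<in> E) \<and>
     {last xs, hd xs} \<in> E"

definition acyclic_graph :: "'a set \<Rightarrow> 'a set set \<Rightarrow> bool" where
  "acyclic_graph V E \<longleftrightarrow> (\<nexists>xs. is_cycle V E xs)"

definition is_tree :: "'a set \<Rightarrow> 'a set set \<Rightarrow> bool" where
  "is_tree V E \<longleftrightarrow> simple_graph V E \<and> V \<noteq> {} \<and> graph_connected V E \<and> acyclic_graph V E"

definition istdf :: "'a set \<Rightarrow> 'a set set \<Rightarrow> ('a \<Rightarrow> int) \<Rightarrow> bool" where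
  "istdf V E f \<longleftrightarrow> (\<forall>v\<in>V. f v \<in> {-1, 1}) \<and>
     (\<forall>v\<in>V. (\<Sum>u\<in>nbhd V E v. f u) \<le> 0)"

definition inv_signed_total_dom_num :: "'a set \<Rightarrow> 'a set set \<Rightarrow> int" where
  "inv_signed_total_dom_num V E = Max {(\<Sum>v\<in>V. f v) | f. istdf V E f}"

definition leaves :: "'a set \<Rightarrow> 'a set set \<Rightarrow> 'a set" where
  "leaves V E = {v \<in> V. card (nbhd V E v) = 1}"

definition supports :: "'a set \<Rightarrow> 'a set set \<Rightarrow> 'a set" where
  "supports V E = {v \<in> V. \<exists>u \<in> leaves V E. u \<in> nbhd V E v}"

definition leaves_at :: "'a set \<Rightarrow> 'a set set \<Rightarrow> 'a \<Rightarrow> 'a set" where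
  "leaves_at V E w = nbhd V E w \<inter> leaves V E"

text \<open>Degree of w in T' = T[S] is card (nbhd w \<inter> S).\<close>

definition deg_support_subgraph :: "'a set \<Rightarrow> 'a set set \<Rightarrow> 'a \<Rightarrow> nat" where
  "deg_support_subgraph V E w = card (nbhd V E w \<inter> supports V E)"

definition isomorphic_P2 :: "'a set \<Rightarrow> 'a set set \<Rightarrow> bool" where
  "isomorphic_P2 V E \<longleftrightarrow> (\<exists>u v. u \<noteq> v \<and> V = {u, v} \<and> E = {{u, v}})"

definition is_star :: "'a set \<Rightarrow> 'a set set \<Rightarrow> bool" where
  "is_star V E \<longleftrightarrow> (\<exists>c\<in>V. E = {{c, v} | v. v \<in> V - {c}})"

definition in_Omega :: "'a set \<Rightarrow> 'a set set \<Rightarrow> bool" where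
  "in_Omega V E \<longleftrightarrow>
     isomorphic_P2 V E \<or>
     ( \<comment> \<open>(a)\<close>
       (\<forall>w\<in>supports V E. card (leaves_at V E w) \<ge> 2) \<and>
       \<comment> \<open>(b) \<Delta>(T') \<le> 1\<close>
       (\<forall>w\<in>supports V E. deg_support_subgraph V E w \<le> 1) \<and>
       \<comment> \<open>(b1) \<Delta>(T') = 1\<close>
       ((\<exists>w\<in>supports V E. deg_support_subgraph V E w = 1) \<longrightarrow>
          V = leaves V E \<union> supports V E \<and>
          (\<forall>w\<in>supports V E. even (card (leaves_at V E w)))) \<and>
       \<comment> \<open>(b2) \<Delta>(T') = 0\<close>
       ((\<forall>w\<in>supports V E. deg_support_subgraph V E w = 0) \<longrightarrow>
          is_star V E \<or>
          ((\<forall>w\<in>supports V E. card (nbhd V E w - (leaves V E \<union> supports V E)) = 1) \<and>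
           (\<forall>x\<in>V - (leaves V E \<union> supports V E). \<exists>w\<in>supports V E. w \<in> nbhd V E x) \<and>
           (\<forall>w\<in>supports V E. even (card (leaves_at V E w))))))"

end

theory Submission imports Defs begin

text \<open>An ISTDF is determined by its set P of vertices of value 1, and f(N(v)) \<le> 0 says that
  at most half of N(v) lies in P; its weight is 2|P| - n. Choosing half of the leaves at
  every support vertex gives such a set of size M = \<Sum> \<lfloor>\<ell>_i/2\<rfloor>, which proves the bound.
  A leaf's support vertex can never lie in P, so the structure of \<Omega> caps |P| at M.
  Conversely, if every admissible P has size at most M, the canonical set of size M
  cannot be enlarged by a single vertex, and each failed enlargement forces one of the
  conditions defining \<Omega>.\<close>

definition istdf_positive_set :: "'a set \<Rightarrow> 'a set set \<Rightarrow> 'a set \<Rightarrow> bool" where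
  "istdf_positive_set V E P \<longleftrightarrow>
     P \<subseteq> V \<and> (\<forall>v\<in>V. 2 * card (nbhd V E v \<inter> P) \<le> card (nbhd V E v))"

definition half_leaves_sum :: "'a set \<Rightarrow> 'a set set \<Rightarrow> nat" where
  "half_leaves_sum V E = (\<Sum>w\<in>supports V E. card (leaves_at V E w) div 2)"

lemma sum_sign_eq:
  fixes f :: "'a \<Rightarrow> int"
  assumes "finite A" and "\<forall>x\<in>A. f x \<in> {-1, 1}"
  shows "(\<Sum>x\<in>A. f x) = 2 * int (card {x\<in>A. f x = 1}) - int (card A)"
proof -
  have "(\<Sum>x\<in>A. f x) = (\<Sum>x\<in>A. (if f x = 1 then 2 else 0) - 1)"
    using assms(2) by (intro sum.cong) auto
  also have "\<dots> = 2 * int (card {x\<in>A. f x = 1}) - int (card A)"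
    using assms(1) by (simp add: sum_subtractf sum.If_cases Int_def)
  finally show ?thesis .
qed

lemma sum_sign_indicator:
  "finite A \<Longrightarrow> (\<Sum>v\<in>A. if v \<in> P then 1 else -1::int) = 2 * int (card (A \<inter> P)) - int (card A)"
proof -
  assume "finite A"
  moreover have "{v\<in>A. (if v \<in> P then 1 else -1::int) = 1} = A \<inter> P"
    by auto
  ultimately show ?thesis
    using sum_sign_eq[of A "\<lambda>v. if v \<in> P then 1 else -1"] by simp
qed

locale finite_simple_graph =
  fixes V :: "'a set" and E :: "'a set set"
  assumes simple: "simple_graph V E"
begin

abbreviation "N \<equiv> nbhd V E"
abbreviation "L \<equiv> leaves V E"
abbreviation "S \<equiv> supports V E"
abbreviation "LA \<equiv> leaves_at V E"
abbreviation "M \<equiv> half_leaves_sum V E"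

lemma finite_vertices: "finite V"
  using simple unfolding simple_graph_def by blast

lemma edgeE:
  assumes "e \<in> E"
  obtains u v where "e = {u, v}" "u \<noteq> v" "u \<in> V" "v \<in> V"
  using simple assms unfolding simple_graph_def by blast

lemma nbhd_subset: "N v \<subseteq> V"
  unfolding nbhd_def by auto

lemma finite_nbhd: "finite (N v)"
  using nbhd_subset finite_vertices finite_subset by blast

lemma nbhd_sym: "u \<in> N v \<Longrightarrow> v \<in> V \<Longrightarrow> v \<in> N u"
  unfolding nbhd_def by (auto simp: insert_commute)

lemma not_in_own_nbhd: "u \<in> N v \<Longrightarrow> u \<noteq> v"
  unfolding nbhd_def by (auto elim: edgeE simp: doubleton_eq_iff)

lemma leaf_in_vertices: "u \<in> L \<Longrightarrow> u \<in> V"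
  unfolding leaves_def by auto

lemma leafE:
  assumes "u \<in> L"
  obtains w where "N u = {w}" "w \<in> V" "u \<in> N w"
proof -
  obtain w where w: "N u = {w}"
    using assms unfolding leaves_def by (auto simp: card_1_singleton_iff)
  then show ?thesis
    using that nbhd_subset nbhd_sym leaf_in_vertices[OF assms] by blast
qed

lemma leaf_nbhd_eq: "u \<in> L \<Longrightarrow> w \<in> N u \<Longrightarrow> N u = {w}"
  by (metis leafE singletonD)

lemma supports_subset: "S \<subseteq> V"
  unfolding supports_def by blast

lemma finite_supports: "finite S"
  using supports_subset finite_vertices finite_subset by blast

lemma support_of_leaf: "u \<in> L \<Longrightarrow> N u = {w} \<Longrightarrow> w \<in> S"
  unfolding supports_def using nbhd_sym leaf_in_vertices nbhd_subset by fastforce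

lemma leaves_at_subset_nbhd: "LA w \<subseteq> N w"
  unfolding leaves_at_def by auto

lemma leaves_at_subset_leaves: "LA w \<subseteq> L"
  unfolding leaves_at_def by auto

lemma finite_leaves_at: "finite (LA w)"
  using leaves_at_subset_nbhd finite_nbhd finite_subset by blast

lemma supports_iff_leaves_at: "w \<in> S \<longleftrightarrow> w \<in> V \<and> LA w \<noteq> {}"
  unfolding supports_def leaves_at_def by auto

lemma leaves_at_nbhd_eq: "u \<in> LA w \<Longrightarrow> w \<in> V \<Longrightarrow> N u = {w}"
  using leaves_at_subset_nbhd leaves_at_subset_leaves nbhd_sym leaf_nbhd_eq by blast

lemma leaves_at_disjoint: "w \<in> V \<Longrightarrow> w' \<in> V \<Longrightarrow> w \<noteq> w' \<Longrightarrow> LA w \<inter> LA w' = {}"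
  using leaves_at_nbhd_eq by blast

lemma card_nbhd_eq: "card (N w) = card (LA w) + card (N w - L)"
  unfolding leaves_at_def using card_Int_Diff finite_nbhd by blast

lemma istdf_of_positive_set:
  assumes "istdf_positive_set V E P"
  shows "istdf V E (\<lambda>v. if v \<in> P then 1 else -1)"
    and "(\<Sum>v\<in>V. if v \<in> P then 1 else -1::int) = 2 * int (card P) - int (card V)"
proof -
  have "(\<Sum>u\<in>N v. if u \<in> P then 1 else -1::int) \<le> 0" if "v \<in> V" for v
  proof -
    have "2 * card (N v \<inter> P) \<le> card (N v)"
      using assms that unfolding istdf_positive_set_def by blast
    then show ?thesis
      using sum_sign_indicator[of "N v" P, OF finite_nbhd] by linarith
  qed
  then show "istdf V E (\<lambda>v. if v \<in> P then 1 else -1)"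
    unfolding istdf_def by simp
  have "V \<inter> P = P"
    using assms unfolding istdf_positive_set_def by blast
  then show "(\<Sum>v\<in>V. if v \<in> P then 1 else -1::int) = 2 * int (card P) - int (card V)"
    using sum_sign_indicator[OF finite_vertices] by simp
qed

lemma positive_set_of_istdf:
  assumes "istdf V E f"
  shows "istdf_positive_set V E {v\<in>V. f v = 1}"
    and "(\<Sum>v\<in>V. f v) = 2 * int (card {v\<in>V. f v = 1}) - int (card V)"
proof -
  have sign: "\<forall>x\<in>V. f x \<in> {-1, 1}"
    using assms unfolding istdf_def by blast
  then show "(\<Sum>v\<in>V. f v) = 2 * int (card {v\<in>V. f v = 1}) - int (card V)"
    using sum_sign_eq[OF finite_vertices] by blast
  have "2 * card (N v \<inter> {v\<in>V. f v = 1}) \<le> card (N v)" if v: "v \<in> V" for v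
  proof -
    have "{x\<in>N v. f x = 1} = N v \<inter> {v\<in>V. f v = 1}"
      using nbhd_subset by blast
    moreover have "(\<Sum>x\<in>N v. f x) = 2 * int (card {x\<in>N v. f x = 1}) - int (card (N v))"
      using sign nbhd_subset by (intro sum_sign_eq[OF finite_nbhd]) blast
    moreover have "(\<Sum>x\<in>N v. f x) \<le> 0"
      using assms v unfolding istdf_def by blast
    ultimately show ?thesis by simp
  qed
  then show "istdf_positive_set V E {v\<in>V. f v = 1}"
    unfolding istdf_positive_set_def by blast
qed

lemma finite_istdf_weights: "finite {(\<Sum>v\<in>V. f v) | f. istdf V E f}"
proof (rule finite_subset)
  show "{(\<Sum>v\<in>V. f v) | f. istdf V E f} \<subseteq> (\<lambda>k. 2 * int k - int (card V)) ` {..card V}"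
  proof
    fix x assume "x \<in> {(\<Sum>v\<in>V. f v) | f. istdf V E f}"
    then obtain f where f: "istdf V E f" "x = (\<Sum>v\<in>V. f v)" by blast
    have "card {v\<in>V. f v = 1} \<in> {..card V}"
      using finite_vertices by (simp add: card_mono)
    then show "x \<in> (\<lambda>k. 2 * int k - int (card V)) ` {..card V}"
      using positive_set_of_istdf(2)[OF f(1)] f(2) by blast
  qed
qed simp

lemma weight_le_inv_signed_total_dom_num:
  assumes "istdf_positive_set V E P"
  shows "2 * int (card P) - int (card V) \<le> inv_signed_total_dom_num V E"
  unfolding inv_signed_total_dom_num_def
  using istdf_of_positive_set[OF assms] by (intro Max_ge[OF finite_istdf_weights]) force

lemma inv_signed_total_dom_num_attained:
  obtains P where "istdf_positive_set V E P"
    and "inv_signed_total_dom_num V E = 2 * int (card P) - int (card V)"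
proof -
  let ?W = "{(\<Sum>v\<in>V. f v) | f. istdf V E f}"
  have "istdf_positive_set V E {}"
    unfolding istdf_positive_set_def by simp
  then have "?W \<noteq> {}"
    using istdf_of_positive_set(1) by blast
  moreover note finite_istdf_weights
  ultimately have "Max ?W \<in> ?W"
    by (rule Max_in[rotated])
  then obtain f where "istdf V E f" "inv_signed_total_dom_num V E = (\<Sum>v\<in>V. f v)"
    unfolding inv_signed_total_dom_num_def by blast
  then show ?thesis
    using that positive_set_of_istdf by metis
qed

lemma positive_set_insert:
  assumes P: "istdf_positive_set V E P" and z: "z \<in> V" "z \<notin> P"
    and room: "\<And>v. v \<in> V \<Longrightarrow> z \<in> N v \<Longrightarrow> 2 * card (N v \<inter> P) + 2 \<le> card (N v)"
  shows "istdf_positive_set V E (insert z P)"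
  unfolding istdf_positive_set_def
proof (intro conjI ballI)
  show "insert z P \<subseteq> V"
    using P z unfolding istdf_positive_set_def by blast
next
  fix v assume v: "v \<in> V"
  show "2 * card (N v \<inter> insert z P) \<le> card (N v)"
  proof (cases "z \<in> N v")
    case True
    then have "N v \<inter> insert z P = insert z (N v \<inter> P)"
      by blast
    then show ?thesis
      using room[OF v True] z(2) finite_nbhd by simp
  next
    case False
    then have "N v \<inter> insert z P = N v \<inter> P"
      by blast
    then show ?thesis
      using P v unfolding istdf_positive_set_def by simp
  qed
qed

lemma support_not_in_positive_set:
  assumes P: "istdf_positive_set V E P" and w: "w \<in> S"
  shows "w \<notin> P"
proof
  assume "w \<in> P"
  obtain u where u: "u \<in> L" "u \<in> N w"
    using w unfolding supports_def by blast
  then have "N u = {w}" "u \<in> V"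
    using leaf_nbhd_eq nbhd_sym supports_subset w leaf_in_vertices by blast+
  then have "2 * card ({w} \<inter> P) \<le> card {w}"
    using P unfolding istdf_positive_set_def by metis
  with \<open>w \<in> P\<close> show False
    by simp
qed

text \<open>Half of the leaves at every support vertex; admissible because a leaf at w sees
  only w.\<close>

lemma half_leaves_positive_set:
  obtains P0 where "istdf_positive_set V E P0" "card P0 = M" "P0 \<subseteq> L"
    "\<And>v. v \<in> V - S \<Longrightarrow> N v \<inter> P0 = {}"
    "\<And>w. w \<in> S \<Longrightarrow> card (N w \<inter> P0) = card (LA w) div 2"
proof -
  have "\<exists>A. A \<subseteq> LA w \<and> card A = card (LA w) div 2" for w
    by (meson div_le_dividend obtain_subset_with_card_n)
  then obtain A where A: "\<And>w. A w \<subseteq> LA w" "\<And>w. card (A w) = card (LA w) div 2"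
    by metis
  define P0 where "P0 = \<Union> (A ` S)"
  have nbhd_P0: "N v \<inter> P0 = (if v \<in> S then A v else {})" if v: "v \<in> V" for v
  proof
    show "N v \<inter> P0 \<subseteq> (if v \<in> S then A v else {})"
    proof
      fix u assume u: "u \<in> N v \<inter> P0"
      then obtain w where w: "w \<in> S" "u \<in> A w"
        unfolding P0_def by blast
      have "N u = {w}"
        using leaves_at_nbhd_eq A(1) w supports_subset by blast
      moreover have "v \<in> N u"
        using nbhd_sym u v by blast
      ultimately show "u \<in> (if v \<in> S then A v else {})"
        using w by simp
    qed
    show "(if v \<in> S then A v else {}) \<subseteq> N v \<inter> P0"
      using A(1) leaves_at_subset_nbhd unfolding P0_def by auto
  qed
  have "\<forall>w\<in>S. finite (A w)"
    using A(1) finite_leaves_at finite_subset by blast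
  moreover have "\<forall>i\<in>S. \<forall>j\<in>S. i \<noteq> j \<longrightarrow> A i \<inter> A j = {}"
    using leaves_at_disjoint A(1) supports_subset by blast
  ultimately have "card P0 = M"
    unfolding P0_def half_leaves_sum_def
    by (simp add: card_UN_disjoint[OF finite_supports] A(2))
  moreover have "P0 \<subseteq> L"
    unfolding P0_def using A(1) leaves_at_subset_leaves by blast
  moreover have "istdf_positive_set V E P0"
    unfolding istdf_positive_set_def
  proof (intro conjI ballI)
    show "P0 \<subseteq> V"
      using \<open>P0 \<subseteq> L\<close> leaf_in_vertices by blast
    fix v assume "v \<in> V"
    have "card (LA v) \<le> card (N v)"
      by (rule card_mono[OF finite_nbhd leaves_at_subset_nbhd])
    then show "2 * card (N v \<inter> P0) \<le> card (N v)"
      using nbhd_P0[OF \<open>v \<in> V\<close>] A(2)[of v] by auto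
  qed
  ultimately show ?thesis
    using that nbhd_P0 A(2) supports_subset by (simp add: subset_iff)
qed

lemma positive_set_card_le_if_covered:
  assumes P: "istdf_positive_set V E P" and cover: "P \<subseteq> (\<Union>w\<in>S. N w)"
    and nonleaf: "\<And>w. w \<in> S \<Longrightarrow> card (N w - L) \<le> 1"
    and even: "\<And>w. w \<in> S \<Longrightarrow> even (card (LA w))"
  shows "card P \<le> M"
proof -
  have "P = (\<Union>w\<in>S. N w \<inter> P)"
    using cover by blast
  then have "card P \<le> (\<Sum>w\<in>S. card (N w \<inter> P))"
    using card_UN_le[OF finite_supports, of "\<lambda>w. N w \<inter> P"] by simp
  also have "\<dots> \<le> (\<Sum>w\<in>S. card (LA w) div 2)"
  proof (rule sum_mono)
    fix w assume w: "w \<in> S"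
    then have "2 * card (N w \<inter> P) \<le> card (LA w) + card (N w - L)"
      using P supports_subset card_nbhd_eq unfolding istdf_positive_set_def by auto
    then show "card (N w \<inter> P) \<le> card (LA w) div 2"
      using nonleaf[OF w] even[OF w] by (auto elim!: evenE)
  qed
  finally show ?thesis
    unfolding half_leaves_sum_def .
qed

lemma positive_set_covered:
  assumes P: "istdf_positive_set V E P"
    and inner: "\<forall>x\<in>V - (L \<union> S). \<exists>w\<in>S. w \<in> N x"
  shows "P \<subseteq> (\<Union>w\<in>S. N w)"
proof
  fix x assume x: "x \<in> P"
  then have "x \<in> V" "x \<notin> S"
    using P support_not_in_positive_set unfolding istdf_positive_set_def by blast+
  then obtain w where "w \<in> S" "w \<in> N x"
  proof (cases "x \<in> L")
    case True
    then obtain w where "N x = {w}"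
      by (rule leafE)
    then show ?thesis
      using that support_of_leaf[OF True] by blast
  qed (use inner \<open>x \<in> V\<close> \<open>x \<notin> S\<close> in blast)
  then show "x \<in> (\<Union>w\<in>S. N w)"
    using nbhd_sym \<open>x \<in> V\<close> by blast
qed

lemma positive_set_card_le_if_P2:
  assumes "isomorphic_P2 V E" and P: "istdf_positive_set V E P"
  shows "card P \<le> M"
proof -
  obtain u v where uv: "u \<noteq> v" "V = {u, v}" "E = {{u, v}}"
    using assms(1) unfolding isomorphic_P2_def by blast
  then have "N u = {v}" "N v = {u}"
    unfolding nbhd_def by (auto simp: doubleton_eq_iff)
  then have "u \<in> S" "v \<in> S"
    using uv support_of_leaf unfolding leaves_def by auto
  then have "P = {}"
    using support_not_in_positive_set[OF P] P uv unfolding istdf_positive_set_def by blast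
  then show ?thesis
    by simp
qed

lemma positive_set_card_le_if_star:
  assumes "card V \<ge> 2" and "is_star V E" and P: "istdf_positive_set V E P"
  shows "card P \<le> M"
proof -
  obtain c where c: "c \<in> V" "E = {{c, v} | v. v \<in> V - {c}}"
    using assms(2) unfolding is_star_def by blast
  have Nv: "N v = {c}" if "v \<in> V - {c}" for v
    using c that unfolding nbhd_def by (auto simp: doubleton_eq_iff)
  have Nc: "N c = V - {c}"
    using c unfolding nbhd_def by (auto simp: doubleton_eq_iff)
  have "V - {c} \<subseteq> L"
    using Nv unfolding leaves_def by auto
  then have LAc: "LA c = N c"
    using Nc unfolding leaves_at_def by blast
  have "V \<noteq> {c}"
    using assms(1) by auto
  then have "V - {c} \<noteq> {}"
    using c by blast
  then have cS: "c \<in> S"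
    using \<open>V - {c} \<subseteq> L\<close> Nv support_of_leaf by blast
  then have "P \<subseteq> N c"
    using support_not_in_positive_set[OF P] P Nc unfolding istdf_positive_set_def by blast
  then have "N c \<inter> P = P"
    by blast
  then have "2 * card P \<le> card (LA c)"
    using P c LAc unfolding istdf_positive_set_def by metis
  then have "card P \<le> card (LA c) div 2"
    by simp
  also have "\<dots> \<le> M"
    unfolding half_leaves_sum_def by (rule member_le_sum[OF cS _ finite_supports]) simp
  finally show ?thesis .
qed

lemma positive_set_card_le_if_Omega:
  assumes n: "card V \<ge> 2" and Omega: "in_Omega V E" and P: "istdf_positive_set V E P"
  shows "card P \<le> M"
proof (cases "isomorphic_P2 V E")
  case True
  then show ?thesis
    using positive_set_card_le_if_P2 P by blast
next
  case False
  then have b: "\<forall>w\<in>S. deg_support_subgraph V E w \<le> 1"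
    and b1: "(\<exists>w\<in>S. deg_support_subgraph V E w = 1) \<longrightarrow>
      V = L \<union> S \<and> (\<forall>w\<in>S. even (card (LA w)))"
    and b2: "(\<forall>w\<in>S. deg_support_subgraph V E w = 0) \<longrightarrow> is_star V E \<or>
      ((\<forall>w\<in>S. card (N w - (L \<union> S)) = 1) \<and> (\<forall>x\<in>V - (L \<union> S). \<exists>w\<in>S. w \<in> N x) \<and>
       (\<forall>w\<in>S. even (card (LA w))))"
    using Omega unfolding in_Omega_def by blast+
  consider (adjacent_supports) "\<exists>w\<in>S. deg_support_subgraph V E w = 1"
    | (independent_supports) "\<forall>w\<in>S. deg_support_subgraph V E w = 0"
    using b by force
  then show ?thesis
  proof cases
    case adjacent_supports
    then have VLS: "V = L \<union> S" and even: "\<forall>w\<in>S. even (card (LA w))"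
      using b1 by blast+
    have "card (N w - L) \<le> 1" if w: "w \<in> S" for w
    proof -
      have "N w - L \<subseteq> N w \<inter> S"
        using nbhd_subset VLS by blast
      then have "card (N w - L) \<le> card (N w \<inter> S)"
        by (intro card_mono) (simp_all add: finite_nbhd)
      then show ?thesis
        using b w unfolding deg_support_subgraph_def by fastforce
    qed
    moreover have "P \<subseteq> (\<Union>w\<in>S. N w)"
      using positive_set_covered[OF P] VLS by blast
    ultimately show ?thesis
      using positive_set_card_le_if_covered[OF P] even by blast
  next
    case independent_supports
    then consider "is_star V E"
      | "\<forall>w\<in>S. card (N w - (L \<union> S)) = 1" "\<forall>x\<in>V - (L \<union> S). \<exists>w\<in>S. w \<in> N x"
        "\<forall>w\<in>S. even (card (LA w))"
      using b2 by blast
    then show ?thesis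
    proof cases
      case 1
      then show ?thesis
        using positive_set_card_le_if_star n P by blast
    next
      case 2
      have "N w - L = N w - (L \<union> S)" if "w \<in> S" for w
        using independent_supports that finite_nbhd
        unfolding deg_support_subgraph_def by auto
      then show ?thesis
        using 2 positive_set_card_le_if_covered[OF P positive_set_covered[OF P]] by simp
    qed
  qed
qed

end

locale connected_simple_graph = finite_simple_graph +
  assumes connected: "graph_connected V E"
begin

lemma connected_closed_subset:
  assumes "C \<subseteq> V" and "c \<in> C" and closed: "\<forall>x\<in>C. N x \<subseteq> C"
  shows "V \<subseteq> C"
proof
  fix v assume "v \<in> V"
  then have "(c, v) \<in> {(x, y). {x, y} \<in> E}\<^sup>*"
    using connected assms(1,2) unfolding graph_connected_def by blast
  then show "v \<in> C"
  proof (induction rule: rtrancl_induct)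
    case (step y z)
    then have "{y, z} \<in> E"
      by simp
    moreover from this have "z \<in> V"
      by (auto elim: edgeE simp: doubleton_eq_iff)
    ultimately have "z \<in> N y"
      unfolding nbhd_def by (simp add: insert_commute)
    then show ?case
      using closed step.IH by blast
  qed (rule assms(2))
qed

lemma isomorphic_P2_if_adjacent_leaves:
  assumes u: "u \<in> L" "w \<in> N u" and w: "w \<in> L"
  shows "isomorphic_P2 V E"
proof -
  have uV: "u \<in> V" and wV: "w \<in> V" and uw: "u \<in> N w"
    using u leaf_in_vertices nbhd_subset nbhd_sym by blast+
  have Nu: "N u = {w}" and Nw: "N w = {u}"
    using leaf_nbhd_eq u w uw by blast+
  have VV: "V = {u, w}"
    using connected_closed_subset[of "{u, w}" u] Nu Nw uV wV by blast
  have "E = {{u, w}}"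
  proof
    show "E \<subseteq> {{u, w}}"
      using VV by (auto elim!: edgeE simp: insert_commute)
    show "{{u, w}} \<subseteq> E"
      using u(2) unfolding nbhd_def by (simp add: insert_commute)
  qed
  then show ?thesis
    unfolding isomorphic_P2_def using VV not_in_own_nbhd[OF uw] by blast
qed

lemma leaf_not_support:
  assumes "\<not> isomorphic_P2 V E" and "x \<in> L"
  shows "x \<notin> S"
proof
  assume "x \<in> S"
  then obtain u where "u \<in> L" "u \<in> N x"
    unfolding supports_def by blast
  then show False
    using assms isomorphic_P2_if_adjacent_leaves nbhd_sym leaf_in_vertices by blast
qed

lemma vertices_eq_if_nbhd_leaves:
  assumes w: "w \<in> V" and NL: "N w \<subseteq> L"
  shows "V = insert w (N w)"
proof -
  have "N x \<subseteq> insert w (N w)" if "x \<in> insert w (N w)" for x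
    using that leaf_nbhd_eq NL nbhd_sym w by (cases "x = w") blast+
  then show ?thesis
    using connected_closed_subset[of "insert w (N w)" w] w nbhd_subset by blast
qed

lemma star_if_nbhd_leaves:
  assumes w: "w \<in> V" and NL: "N w \<subseteq> L"
  shows "is_star V E"
proof -
  have V: "V = insert w (N w)"
    by (rule vertices_eq_if_nbhd_leaves[OF assms])
  have "E = {{w, v} | v. v \<in> V - {w}}"
  proof
    show "E \<subseteq> {{w, v} | v. v \<in> V - {w}}"
    proof
      fix e assume "e \<in> E"
      then obtain a b where ab: "e = {a, b}" "a \<noteq> b" "a \<in> V" "b \<in> V"
        by (rule edgeE)
      have "a = w \<or> b = w"
      proof (rule ccontr)
        assume "\<not> (a = w \<or> b = w)"
        then have "a \<in> N w" "b \<in> N a"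
          using ab V \<open>e \<in> E\<close> unfolding nbhd_def by (auto simp: insert_commute)
        then show False
          using leaf_nbhd_eq NL nbhd_sym w \<open>\<not> (a = w \<or> b = w)\<close> by blast
      qed
      then show "e \<in> {{w, v} | v. v \<in> V - {w}}"
        using ab by (auto simp: insert_commute)
    qed
    show "{{w, v} | v. v \<in> V - {w}} \<subseteq> E"
      using V unfolding nbhd_def by (auto simp: insert_commute)
  qed
  then show ?thesis
    unfolding is_star_def using w by blast
qed

context
  assumes bounded: "\<And>P. istdf_positive_set V E P \<Longrightarrow> card P \<le> M"
begin

lemma maximal_positive_set_blocked:
  assumes P: "istdf_positive_set V E P" "card P = M" and z: "z \<in> V" "z \<notin> P"
  obtains v where "v \<in> V" "z \<in> N v" "card (N v) < 2 * card (N v \<inter> P) + 2"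
proof (rule ccontr)
  assume "\<not> thesis"
  then have "istdf_positive_set V E (insert z P)"
    using that by (intro positive_set_insert[OF P(1) z]) force
  moreover have "finite P"
    using P(1) finite_vertices finite_subset unfolding istdf_positive_set_def by blast
  ultimately show False
    using bounded[of "insert z P"] P(2) z(2) by simp
qed

lemma card_nbhd_support_le:
  assumes w: "w \<in> S"
  shows "card (N w) \<le> 2 * (card (LA w) div 2) + 1"
proof -
  obtain P0 where P0: "istdf_positive_set V E P0" "card P0 = M"
    and half: "card (N w \<inter> P0) = card (LA w) div 2"
    using half_leaves_positive_set w by metis
  have "LA w \<noteq> {}"
    using w supports_iff_leaves_at by blast
  then have "card (N w \<inter> P0) < card (LA w)"
    using half finite_leaves_at by (simp add: card_gt_0_iff)
  then have "\<not> LA w \<subseteq> N w \<inter> P0"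
    using card_mono[of "N w \<inter> P0" "LA w"] finite_nbhd by auto
  then obtain z where z: "z \<in> LA w" "z \<notin> P0"
    using leaves_at_subset_nbhd by blast
  have wV: "w \<in> V"
    using w supports_subset by blast
  have "z \<in> V"
    using z(1) leaves_at_subset_nbhd nbhd_subset by blast
  then obtain v where "v \<in> V" "z \<in> N v" "card (N v) < 2 * card (N v \<inter> P0) + 2"
    using maximal_positive_set_blocked[OF P0] z(2) by metis
  moreover have "v = w"
    using \<open>v \<in> V\<close> \<open>z \<in> N v\<close> nbhd_sym leaves_at_nbhd_eq[OF z(1) wV] by blast
  ultimately show ?thesis
    using half by simp
qed

lemma card_nonleaf_nbhd_le: "w \<in> S \<Longrightarrow> card (N w - L) \<le> 1"
  and even_leaves_at_if_nonleaf: "w \<in> S \<Longrightarrow> card (N w - L) = 1 \<Longrightarrow> even (card (LA w))"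
  using card_nbhd_support_le[of w] card_nbhd_eq[of w]
  by (cases "even (card (LA w))"; auto elim!: evenE oddE)+

lemma inner_vertex_has_support_neighbour:
  assumes x: "x \<in> V - (L \<union> S)"
  shows "\<exists>w\<in>S. w \<in> N x"
proof (rule ccontr)
  assume no_support: "\<not> ?thesis"
  obtain P0 where P0: "istdf_positive_set V E P0" "card P0 = M" "P0 \<subseteq> L"
    and outside: "\<And>v. v \<in> V - S \<Longrightarrow> N v \<inter> P0 = {}"
    using half_leaves_positive_set by metis
  obtain v where v: "v \<in> V" "x \<in> N v" "card (N v) < 2 * card (N v \<inter> P0) + 2"
    using maximal_positive_set_blocked[OF P0(1,2)] x P0(3) by blast
  have "v \<notin> S"
    using nbhd_sym v x no_support by blast
  then have "card (N v) \<le> 1"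
    using outside v by simp
  then have "N v = {x}"
    using v(2) finite_nbhd card_le_Suc0_iff_eq[of "N v"] by auto
  then show False
    using support_of_leaf v x unfolding leaves_def by simp
qed

lemma nonleaf_nbhd_eq:
  assumes "w \<in> S" "w' \<in> N w" "w' \<notin> L"
  shows "N w - L = {w'}"
proof -
  have "\<forall>a\<in>N w - L. \<forall>b\<in>N w - L. a = b"
    using card_nonleaf_nbhd_le[OF assms(1)] finite_nbhd card_le_Suc0_iff_eq[of "N w - L"] by simp
  then show ?thesis
    using assms(2,3) by blast
qed

context
  assumes not_P2: "\<not> isomorphic_P2 V E"
begin

lemma Omega_condition_a:
  assumes w: "w \<in> S"
  shows "card (LA w) \<ge> 2"
proof (rule ccontr)
  assume "\<not> card (LA w) \<ge> 2"
  moreover have "LA w \<noteq> {}"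
    using w supports_iff_leaves_at by blast
  moreover have "card (LA w) \<noteq> 0"
    using \<open>LA w \<noteq> {}\<close> finite_leaves_at by simp
  ultimately have "card (LA w) = 1"
    by linarith
  then have "card (N w - L) = 0"
    using card_nonleaf_nbhd_le[OF w] even_leaves_at_if_nonleaf[OF w] by fastforce
  then have "card (N w) = 1"
    using card_nbhd_eq \<open>card (LA w) = 1\<close> by simp
  then have "w \<in> L"
    using w supports_subset unfolding leaves_def by blast
  then show False
    using leaf_not_support[OF not_P2] w by blast
qed

lemma Omega_condition_b:
  assumes w: "w \<in> S"
  shows "deg_support_subgraph V E w \<le> 1"
proof -
  have "N w \<inter> S \<subseteq> N w - L"
    using leaf_not_support[OF not_P2] by blast
  then have "card (N w \<inter> S) \<le> card (N w - L)"
    by (intro card_mono) (simp_all add: finite_nbhd)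
  then show ?thesis
    using card_nonleaf_nbhd_le[OF w] unfolding deg_support_subgraph_def by simp
qed

lemma Omega_condition_b1:
  assumes w: "w \<in> S" "deg_support_subgraph V E w = 1"
  shows "V = L \<union> S" and "\<forall>v\<in>S. even (card (LA v))"
proof -
  obtain w' where "N w \<inter> S = {w'}"
    using w(2) unfolding deg_support_subgraph_def by (rule card_1_singletonE)
  then have w': "w' \<in> N w" "w' \<in> S"
    by blast+
  have wV: "w \<in> V" and w'V: "w' \<in> V"
    using w w' supports_subset by blast+
  have wL: "w \<notin> L" and w'L: "w' \<notin> L"
    using leaf_not_support[OF not_P2] w w' by blast+
  have "N w - L = {w'}" and "N w' - L = {w}"
    using nonleaf_nbhd_eq w w' wL w'L nbhd_sym wV by blast+
  then have "N w \<subseteq> {w'} \<union> LA w" and "N w' \<subseteq> {w} \<union> LA w'"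
    unfolding leaves_at_def by blast+
  then have "\<forall>x\<in>{w, w'} \<union> LA w \<union> LA w'. N x \<subseteq> {w, w'} \<union> LA w \<union> LA w'"
    using leaves_at_nbhd_eq wV w'V by blast
  moreover have "{w, w'} \<union> LA w \<union> LA w' \<subseteq> V"
    using wV w'V leaves_at_subset_nbhd nbhd_subset by blast
  ultimately have "V \<subseteq> {w, w'} \<union> LA w \<union> LA w'"
    using connected_closed_subset[of _ w] by blast
  then show "V = L \<union> S"
    using w w' leaves_at_subset_leaves leaf_in_vertices supports_subset by blast
  show "\<forall>v\<in>S. even (card (LA v))"
  proof
    fix v assume v: "v \<in> S"
    have "card (N v - L) \<noteq> 0"
    proof
      assume "card (N v - L) = 0"
      then have NL: "N v \<subseteq> L"
        using finite_nbhd by simp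
      then have V: "V = insert v (N v)"
        using vertices_eq_if_nbhd_leaves v supports_subset by blast
      have "w \<in> insert v (N v)" "w' \<in> insert v (N v)"
        using wV w'V unfolding V[symmetric] .
      then show False
        using NL wL w'L not_in_own_nbhd[OF w'(1)] by blast
    qed
    then show "even (card (LA v))"
      using card_nonleaf_nbhd_le[OF v] even_leaves_at_if_nonleaf[OF v] by simp
  qed
qed

lemma Omega_condition_b2:
  assumes independent: "\<forall>w\<in>S. deg_support_subgraph V E w = 0" and not_star: "\<not> is_star V E"
  shows "\<forall>w\<in>S. card (N w - (L \<union> S)) = 1"
    and "\<forall>x\<in>V - (L \<union> S). \<exists>w\<in>S. w \<in> N x"
    and "\<forall>w\<in>S. even (card (LA w))"
proof -
  have nonleaf: "card (N w - L) = 1" if w: "w \<in> S" for w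
  proof -
    have "card (N w - L) \<noteq> 0"
      using star_if_nbhd_leaves not_star w supports_subset finite_nbhd by auto
    then show ?thesis
      using card_nonleaf_nbhd_le[OF w] by simp
  qed
  have "N w - (L \<union> S) = N w - L" if "w \<in> S" for w
    using independent that finite_nbhd unfolding deg_support_subgraph_def by auto
  then show "\<forall>w\<in>S. card (N w - (L \<union> S)) = 1"
    using nonleaf by simp
  show "\<forall>w\<in>S. even (card (LA w))"
    using nonleaf even_leaves_at_if_nonleaf by blast
  show "\<forall>x\<in>V - (L \<union> S). \<exists>w\<in>S. w \<in> N x"
    using inner_vertex_has_support_neighbour by blast
qed

end

lemma in_Omega_if_positive_sets_bounded: "in_Omega V E"
proof (cases "isomorphic_P2 V E")
  case True
  then show ?thesis
    unfolding in_Omega_def by blast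
next
  case False
  then show ?thesis
    unfolding in_Omega_def
    using Omega_condition_a Omega_condition_b Omega_condition_b1 Omega_condition_b2 by blast
qed

end

end

theorem theorem4p3:
  fixes V :: "'a set" and E :: "'a set set"
  assumes "is_tree V E" and "card V \<ge> 2"
  shows "inv_signed_total_dom_num V E \<ge>
           - int (card V) + 2 * (\<Sum>w\<in>supports V E. int (card (leaves_at V E w) div 2)) \<and>
         (inv_signed_total_dom_num V E =
           - int (card V) + 2 * (\<Sum>w\<in>supports V E. int (card (leaves_at V E w) div 2))
         \<longleftrightarrow> in_Omega V E)"
proof -
  interpret connected_simple_graph V E
    using assms(1) unfolding is_tree_def by unfold_locales blast+
  have sum_eq: "(\<Sum>w\<in>supports V E. int (card (leaves_at V E w) div 2)) = int M"
    unfolding half_leaves_sum_def by (simp add: of_nat_sum)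
  obtain P0 where "istdf_positive_set V E P0" "card P0 = M"
    using half_leaves_positive_set by metis
  then have lower: "- int (card V) + 2 * int M \<le> inv_signed_total_dom_num V E"
    using weight_le_inv_signed_total_dom_num by fastforce
  obtain P where P: "istdf_positive_set V E P"
    and gamma: "inv_signed_total_dom_num V E = 2 * int (card P) - int (card V)"
    by (rule inv_signed_total_dom_num_attained)
  have "inv_signed_total_dom_num V E = - int (card V) + 2 * int M \<longleftrightarrow>
      (\<forall>Q. istdf_positive_set V E Q \<longrightarrow> card Q \<le> M)"
    using lower gamma P weight_le_inv_signed_total_dom_num by fastforce
  also have "\<dots> \<longleftrightarrow> in_Omega V E"
    using in_Omega_if_positive_sets_bounded positive_set_card_le_if_Omega assms(2) by blast
  finally show ?thesis
    unfolding sum_eq using lower by blast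
qed

end
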